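(* For every integer $n\ge0$ let $\mathcal Q_n$ be the complex vector space of polynomials $q(\xi_1,\ldots,\xi_n|\eta_1,\ldots,\eta_n)$ that are homogeneous of weighted degree $n$ (the variables $\xi_i,\eta_i$ having weight $i$) such that the polynomials $$Q_{N,M}(X|Z)=q\bigl(S_1(X),\ldots,S_n(X)\,\big|\,S_1(Z),\ldots,S_n(Z)\bigr),\qquad X=(x_1,\ldots,x_N),\ Z=(z_1,\ldots,z_M),$$ where $S_r$ denotes the $r$-th power sum, satisfy for all integers $N,M\ge0$ the chain equation $$Q_{N+2,M+1}(X,x,-x\,|\,Z,ix)=Q_{N,M}(X|Z)$$ identically in all variables. Then $$\sum_{n=0}^\infty q^n\dim\mathcal Q_n=\prod_{k=1}^\infty\frac1{1-q^k}.$$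
   Context: Such polynomials $Q_{N,M}$ are automatically symmetric in $X$ and in $Z$ separately; they parametrize (in the kink sector of the sine-Gordon model) form factors of chiral descendant operators. *)

theory Defs
  imports "HOL-Analysis.Analysis" "HOL-Library.Function_Algebras" "HOL-Library.Multiset"
begin

text \<open>A monomial in the variables xi_1, xi_2, ... and eta_1, eta_2, ... is encoded by a pair
 of multisets of positive integers (lam, mu): it is the product of xi_i over i in lam times
 the product of eta_j over j in mu.  The weighted-homogeneous monomials of degree n automatically only
 involve xi_1..xi_n, eta_1..eta_n.\<close>

definition wmonos :: "nat \<Rightarrow> (nat multiset \<times> nat multiset) set" where
  "wmonos n = {(lam, mu). 0 \<notin># lam \<and> 0 \<notin># mu \<and> sum_mset lam + sum_mset mu = n}"

text \<open>A polynomial q in Q_n-ambient space is given by its coefficient function c,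
 supported on wmonos n.\<close>

definition power_sum :: "nat \<Rightarrow> complex list \<Rightarrow> complex" where
  "power_sum r X = sum_list (map (\<lambda>x. x ^ r) X)"

definition evalQ :: "nat \<Rightarrow> (nat multiset \<times> nat multiset \<Rightarrow> complex)
    \<Rightarrow> complex list \<Rightarrow> complex list \<Rightarrow> complex" where
  "evalQ n c X Z = (\<Sum>p\<in>wmonos n. c p *
      (\<Prod>i\<in>#fst p. power_sum i X) * (\<Prod>j\<in>#snd p. power_sum j Z))"

definition Qspace :: "nat \<Rightarrow> (nat multiset \<times> nat multiset \<Rightarrow> complex) set" where
  "Qspace n = {c. (\<forall>p. p \<notin> wmonos n \<longrightarrow> c p = 0) \<and>
      (\<forall>X Z x. evalQ n c (X @ [x, - x]) (Z @ [\<i> * x]) = evalQ n c X Z)}"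

definition dimQ :: "nat \<Rightarrow> nat" where
  "dimQ n = vector_space.dim (\<lambda>(a::complex) f. (\<lambda>p. a * f p)) (Qspace n)"

end

theory Submission
  imports Defs "HOL-Computational_Algebra.Fundamental_Theorem_Algebra"
begin

text \<open>Since the power sums are algebraically independent, an element of \<open>Q\<^sub>n\<close> is a polynomial
  identity in arbitrary values \<open>S\<^sub>r(X), S\<^sub>r(Z)\<close>. Appending chain pairs \<open>x, -x | \<i>x\<close> moves
  \<open>S\<^sub>r(X)\<close> for even \<open>r\<close> and \<open>S\<^sub>r(Z)\<close> for odd \<open>r\<close> freely, so an element of \<open>Q\<^sub>n\<close> is
  determined by its coefficients on the monomials built from \<open>\<xi>\<^sub>r\<close> with \<open>r\<close> odd and \<open>\<eta>\<^sub>r\<close>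
  with \<open>r\<close> even, which correspond to the partitions of \<open>n\<close>. Conversely, for each partition the
  product over its parts of the chain-invariant linear forms \<open>\<xi>\<^sub>r\<close> (\<open>r\<close> odd) and
  \<open>\<eta>\<^sub>r - \<i>\<^sup>r\<xi>\<^sub>r/2\<close> (\<open>r\<close> even) lies in \<open>Q\<^sub>n\<close> and has exactly one such coefficient.
  So \<open>dim Q\<^sub>n\<close> is the number of partitions of \<open>n\<close>, whose generating function is Euler's
  product.\<close>

section \<open>Linear independence of monomials\<close>

lemma prod_mset_fun_upd:
  "(\<Prod>x\<in>#M. (f(v := t)) x) = t ^ count M v * (\<Prod>x\<in>#{#x\<in>#M. x \<noteq> v#}. f x)"
proof -
  have "image_mset (f(v := t)) M
      = image_mset (f(v := t)) {#x\<in>#M. x = v#} + image_mset (f(v := t)) {#x\<in>#M. x \<noteq> v#}"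
    by (metis image_mset_union multiset_partition)
  then have "(\<Prod>x\<in>#M. (f(v := t)) x)
      = (\<Prod>x\<in>#{#x\<in>#M. x = v#}. (f(v := t)) x) * (\<Prod>x\<in>#{#x\<in>#M. x \<noteq> v#}. (f(v := t)) x)"
    by (simp only: prod_mset.union)
  also have "(\<Prod>x\<in>#{#x\<in>#M. x = v#}. (f(v := t)) x) = t ^ count M v"
    by (simp add: filter_eq_replicate_mset)
  also have "(\<Prod>x\<in>#{#x\<in>#M. x \<noteq> v#}. (f(v := t)) x) = (\<Prod>x\<in>#{#x\<in>#M. x \<noteq> v#}. f x)"
    by (intro arg_cong[where f = prod_mset] image_mset_cong) auto
  finally show ?thesis .
qed

lemma filter_mset_neq_plus_replicate_mset: "{#x\<in>#M. x \<noteq> v#} + replicate_mset (count M v) v = M"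
  by (subst (3) multiset_partition[where P = "\<lambda>x. x \<noteq> v"]) (simp add: filter_eq_replicate_mset)

lemma sum_monomials_by_degree:
  fixes c :: "'v multiset \<Rightarrow> 'a::comm_ring_1"
  assumes "finite W" and "\<forall>m\<in>W. count m v \<le> K"
  shows "(\<Sum>m\<in>W. c m * (\<Prod>x\<in>#m. (f(v := t)) x))
    = (\<Sum>i\<le>K. (\<Sum>m\<in>{m\<in>W. count m v = i}. c m * (\<Prod>x\<in>#{#x\<in>#m. x \<noteq> v#}. f x)) * t ^ i)"
proof -
  have "(\<Sum>m\<in>W. c m * (\<Prod>x\<in>#m. (f(v := t)) x))
      = (\<Sum>m\<in>W. c m * (t ^ count m v * (\<Prod>x\<in>#{#x\<in>#m. x \<noteq> v#}. f x)))"
    by (simp only: prod_mset_fun_upd)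
  also have "\<dots> = (\<Sum>i\<le>K. \<Sum>m\<in>{m\<in>W. count m v = i}. c m * (t ^ count m v * (\<Prod>x\<in>#{#x\<in>#m. x \<noteq> v#}. f x)))"
    by (rule sum.group[symmetric]) (use assms in auto)
  also have "\<dots> = (\<Sum>i\<le>K. (\<Sum>m\<in>{m\<in>W. count m v = i}. c m * (\<Prod>x\<in>#{#x\<in>#m. x \<noteq> v#}. f x)) * t ^ i)"
    unfolding sum_distrib_right by (intro sum.cong refl) (auto simp: mult_ac)
  finally show ?thesis .
qed

lemma monomial_layer_coeffs_eq_0:
  fixes c :: "'v multiset \<Rightarrow> 'a::{idom,real_normed_div_algebra}"
  assumes "finite W" and "\<And>f. (\<Sum>m\<in>W. c m * (\<Prod>x\<in>#m. f x)) = 0"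
  shows "(\<Sum>m\<in>{m\<in>W. count m v = i}. c m * (\<Prod>x\<in>#{#x\<in>#m. x \<noteq> v#}. f x)) = 0"
proof -
  define K where "K = Max ((\<lambda>m. count m v) ` W)"
  have K: "\<forall>m\<in>W. count m v \<le> K"
    unfolding K_def using assms(1) by auto
  show ?thesis
  proof (cases "i \<le> K")
    case True
    have "(\<Sum>i\<le>K. (\<Sum>m\<in>{m\<in>W. count m v = i}. c m * (\<Prod>x\<in>#{#x\<in>#m. x \<noteq> v#}. f x)) * t ^ i) = 0" for t
      using assms(2)[of "f(v := t)"] unfolding sum_monomials_by_degree[OF assms(1) K] .
    with True show ?thesis
      using polyfun_eq_0[where n = K and c = "\<lambda>i. \<Sum>m\<in>{m\<in>W. count m v = i}. c m * (\<Prod>x\<in>#{#x\<in>#m. x \<noteq> v#}. f x)"]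
      by (simp add: mult.commute)
  next
    case False
    then have "{m\<in>W. count m v = i} = {}" using K by fastforce
    then show ?thesis by (simp only: sum.empty)
  qed
qed

text \<open>Induction on the set of variables: the monomials of a fixed degree in \<open>v\<close>, with \<open>v\<close>
  stripped, again satisfy the hypothesis.\<close>

lemma monomial_coeffs_eq_0:
  fixes c :: "'v multiset \<Rightarrow> 'a::{idom,real_normed_div_algebra}"
  assumes "finite V" "finite W" "\<forall>m\<in>W. set_mset m \<subseteq> V"
    and "\<And>f. (\<Sum>m\<in>W. c m * (\<Prod>x\<in>#m. f x)) = 0"
  shows "\<forall>m\<in>W. c m = 0"
  using assms
proof (induction V arbitrary: W c rule: finite_induct)
  case empty
  then have "W \<subseteq> {{#}}" by auto
  with empty.prems(3) show ?case
    by (cases "W = {}") (auto dest: subset_singletonD)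
next
  case (insert v V W c)
  show ?case
  proof
    fix m assume m: "m \<in> W"
    let ?strip = "\<lambda>m. {#x\<in>#m. x \<noteq> v#}"
    define W' where "W' = {m'\<in>W. count m' v = count m v}"
    have rebuild: "?strip m' + replicate_mset (count m v) v = m'" if "m' \<in> W'" for m'
      using that filter_mset_neq_plus_replicate_mset[of v m'] unfolding W'_def by simp
    have inj: "inj_on ?strip W'"
      by (rule inj_onI) (metis rebuild)
    have "\<forall>m'\<in>?strip ` W'. c (m' + replicate_mset (count m v) v) = 0"
    proof (rule insert.IH)
      show "finite (?strip ` W')" "\<forall>m\<in>?strip ` W'. set_mset m \<subseteq> V"
        unfolding W'_def using insert.prems(1,2) by auto
      have "(\<Sum>m'\<in>?strip ` W'. c (m' + replicate_mset (count m v) v) * (\<Prod>x\<in>#m'. f x))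
          = (\<Sum>m'\<in>W'. c m' * (\<Prod>x\<in>#?strip m'. f x))" for f
        unfolding sum.reindex[OF inj] o_def by (intro sum.cong refl) (simp add: rebuild)
      then show "(\<Sum>m'\<in>?strip ` W'. c (m' + replicate_mset (count m v) v) * (\<Prod>x\<in>#m'. f x)) = 0" for f
        using monomial_layer_coeffs_eq_0[OF insert.prems(1,3)] unfolding W'_def by simp
    qed
    moreover have "m \<in> W'" using m unfolding W'_def by simp
    ultimately show "c m = 0"
      by (metis imageI rebuild)
  qed
qed

lemma pair_monomial_coeffs_eq_0:
  fixes c :: "'v multiset \<times> 'w multiset \<Rightarrow> 'a::{idom,real_normed_div_algebra}"
  assumes "finite W"
    and "\<And>a b. (\<Sum>p\<in>W. c p * (\<Prod>i\<in>#fst p. a i) * (\<Prod>j\<in>#snd p. b j)) = 0"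
  shows "\<forall>p\<in>W. c p = 0"
proof -
  define enc where "enc p = image_mset Inl (fst p) + image_mset Inr (snd p)"
    for p :: "'v multiset \<times> 'w multiset"
  define dec where "dec m = (image_mset projl (filter_mset isl m), image_mset projr (filter_mset (Not \<circ> isl) m))"
    for m :: "('v + 'w) multiset"
  have dec_enc: "dec (enc p) = p" for p
    by (cases p) (simp add: dec_def enc_def filter_mset_image_mset image_mset.compositionality comp_def)
  then have inj: "inj_on enc W"
    by (metis inj_onI)
  have "\<forall>m\<in>enc ` W. (c \<circ> dec) m = 0"
  proof (rule monomial_coeffs_eq_0)
    show "finite (\<Union>m\<in>enc ` W. set_mset m)" "finite (enc ` W)"
      using assms(1) by auto
    show "\<forall>m\<in>enc ` W. set_mset m \<subseteq> (\<Union>m\<in>enc ` W. set_mset m)"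
      by auto
    have "(\<Sum>m\<in>enc ` W. (c \<circ> dec) m * (\<Prod>x\<in>#m. f x))
        = (\<Sum>p\<in>W. c p * (\<Prod>i\<in>#fst p. f (Inl i)) * (\<Prod>j\<in>#snd p. f (Inr j)))" for f
      unfolding sum.reindex[OF inj]
      by (simp add: dec_enc[unfolded enc_def] enc_def image_mset.compositionality comp_def mult.assoc)
    then show "(\<Sum>m\<in>enc ` W. (c \<circ> dec) m * (\<Prod>x\<in>#m. f x)) = 0" for f
      using assms(2) by simp
  qed
  then show ?thesis
    by (simp add: dec_enc)
qed

section \<open>Power sums\<close>

lemma power_sum_Nil [simp]: "power_sum r [] = 0"
  by (simp add: power_sum_def)

lemma power_sum_Cons [simp]: "power_sum r (x # X) = x ^ r + power_sum r X"
  by (simp add: power_sum_def)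

lemma power_sum_append [simp]: "power_sum r (X @ Y) = power_sum r X + power_sum r Y"
  by (simp add: power_sum_def)

lemma power_sum_pairs: "power_sum r (concat (map (\<lambda>x. [x, - x]) xs)) = (1 + (-1) ^ r) * power_sum r xs"
proof (induction xs)
  case (Cons x xs)
  have "(- x) ^ r = (-1) ^ r * x ^ r"
    by (rule power_minus)
  with Cons show ?case
    by (simp add: distrib_right distrib_left)
qed simp

lemma power_sum_scale: "power_sum r (map (\<lambda>x. a * x) xs) = a ^ r * power_sum r xs"
  by (induction xs) (simp_all add: power_mult_distrib distrib_left)

lemma power_sum_roots_of_unity:
  assumes "m > 0"
  shows "power_sum s (map (\<lambda>j. t * exp (2 * of_real pi * \<i> / of_nat m) ^ j) [0..<m])
    = (if m dvd s then of_nat m * t ^ s else 0)"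
proof -
  define w where "w = exp (2 * of_real pi * \<i> / of_nat m)"
  have w_pow: "w ^ k = exp (2 * of_real pi * \<i> * of_nat k / of_nat m)" for k
    unfolding w_def by (simp flip: exp_of_nat_mult add: field_simps)
  have "power_sum s (map (\<lambda>j. t * w ^ j) [0..<m]) = t ^ s * (\<Sum>j<m. (w ^ s) ^ j)"
    unfolding power_sum_def
    by (simp add: sum_list_sum_nth lessThan_atLeast0 power_mult_distrib sum_distrib_left
        flip: power_mult) (simp add: mult.commute)
  also have "(\<Sum>j<m. (w ^ s) ^ j) = (if m dvd s then of_nat m else 0)"
  proof (cases "m dvd s")
    case True
    then have "w ^ s = 1" unfolding w_pow using complex_root_unity_eq_1[of m s] assms by simp
    then show ?thesis using True by simp
  next
    case False
    then have "w ^ s \<noteq> 1" unfolding w_pow using complex_root_unity_eq_1[of m s] assms by simp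
    moreover have "(w ^ s) ^ m = (w ^ m) ^ s"
      by (simp flip: power_mult add: mult.commute)
    moreover have "w ^ m = 1"
      unfolding w_pow using assms by simp
    ultimately show ?thesis using False by (simp add: geometric_sum)
  qed
  finally show ?thesis
    unfolding w_def by simp
qed

text \<open>Appending the \<open>r\<close>-th roots of unity scaled by \<open>t\<close> adds \<open>r t\<^sup>r\<close> to the \<open>r\<close>-th
  power sum and leaves the lower ones unchanged.\<close>

lemma power_sums_surj: "\<exists>xs. \<forall>r\<in>{1..n}. power_sum r xs = v r"
proof (induction n)
  case (Suc n)
  then obtain xs where xs: "\<forall>r\<in>{1..n}. power_sum r xs = v r" by blast
  obtain t where t: "t ^ Suc n = (v (Suc n) - power_sum (Suc n) xs) / of_nat (Suc n)"
    using nth_root_exists[of "Suc n"] by blast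
  define ys where "ys = xs @ map (\<lambda>j. t * exp (2 * of_real pi * \<i> / of_nat (Suc n)) ^ j) [0..<Suc n]"
  have "power_sum r ys = v r" if r: "r \<in> {1..Suc n}" for r
  proof (cases "r = Suc n")
    case True
    then show ?thesis
      unfolding ys_def using power_sum_roots_of_unity[of "Suc n" r t] t by (simp del: of_nat_Suc)
  next
    case False
    then have "\<not> Suc n dvd r" using r by (auto dest: dvd_imp_le)
    then show ?thesis
      unfolding ys_def using power_sum_roots_of_unity[of "Suc n" r t] xs r False by auto
  qed
  then show ?case by blast
qed simp

section \<open>Weighted-homogeneous polynomials in the power sums\<close>

type_synonym coeffs = "nat multiset \<times> nat multiset \<Rightarrow> complex"

definition wpoly :: "nat \<Rightarrow> coeffs \<Rightarrow> (nat \<Rightarrow> complex) \<Rightarrow> (nat \<Rightarrow> complex) \<Rightarrow> complex" where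
  "wpoly n c a b = (\<Sum>p\<in>wmonos n. c p * (\<Prod>i\<in>#fst p. a i) * (\<Prod>j\<in>#snd p. b j))"

definition homogeneous :: "nat \<Rightarrow> coeffs \<Rightarrow> bool" where
  "homogeneous n c \<longleftrightarrow> (\<forall>p. p \<notin> wmonos n \<longrightarrow> c p = 0)"

lemma evalQ_eq_wpoly: "evalQ n c X Z = wpoly n c (\<lambda>i. power_sum i X) (\<lambda>j. power_sum j Z)"
  by (simp add: evalQ_def wpoly_def)

lemma Qspace_iff:
  "c \<in> Qspace n \<longleftrightarrow>
    homogeneous n c \<and> (\<forall>X Z x. evalQ n c (X @ [x, - x]) (Z @ [\<i> * x]) = evalQ n c X Z)"
  by (simp add: Qspace_def homogeneous_def)

lemma member_le_sum_mset: "(i::nat) \<in># M \<Longrightarrow> i \<le> sum_mset M"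
  by (induction M) auto

lemma size_le_sum_mset: "0 \<notin># (M::nat multiset) \<Longrightarrow> size M \<le> sum_mset M"
proof (induction M)
  case (add x M)
  then show ?case by (cases x) auto
qed simp

lemma wmonos_index_bounded:
  assumes "p \<in> wmonos n" "i \<in># fst p + snd p"
  shows "i \<in> {1..n}"
proof -
  have "0 \<notin># fst p + snd p" "sum_mset (fst p + snd p) = n"
    using assms(1) by (auto simp: wmonos_def)
  with member_le_sum_mset[OF assms(2)] assms(2) show ?thesis
    by (cases i) auto
qed

lemma finite_wmonos: "finite (wmonos n)"
proof -
  define B where "B = (\<Union>k\<le>n. multisets_of_size {1..n} k)"
  have "(l, m) \<in> B \<times> B" if p: "(l, m) \<in> wmonos n" for l m
  proof -
    have "size l \<le> n" "size m \<le> n"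
      using p size_le_sum_mset[of l] size_le_sum_mset[of m] by (auto simp: wmonos_def)
    moreover have "set_mset l \<subseteq> {1..n}" "set_mset m \<subseteq> {1..n}"
      using wmonos_index_bounded[OF p] by auto
    ultimately show ?thesis
      unfolding B_def multisets_of_size_def by auto
  qed
  then have "wmonos n \<subseteq> B \<times> B"
    by auto
  moreover have "finite B"
    unfolding B_def by auto
  ultimately show ?thesis
    by (meson finite_SigmaI finite_subset)
qed

lemma wpoly_cong:
  assumes "\<forall>i\<in>{1..n}. a i = a' i" "\<forall>i\<in>{1..n}. b i = b' i"
  shows "wpoly n c a b = wpoly n c a' b'"
  unfolding wpoly_def
proof (intro sum.cong refl)
  fix p assume p: "p \<in> wmonos n"
  have "(\<Prod>i\<in>#fst p. a i) = (\<Prod>i\<in>#fst p. a' i)" "(\<Prod>j\<in>#snd p. b j) = (\<Prod>j\<in>#snd p. b' j)"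
    using assms wmonos_index_bounded[OF p] by (auto intro!: arg_cong[where f = prod_mset] image_mset_cong)
  then show "c p * (\<Prod>i\<in>#fst p. a i) * (\<Prod>j\<in>#snd p. b j) = c p * (\<Prod>i\<in>#fst p. a' i) * (\<Prod>j\<in>#snd p. b' j)"
    by simp
qed

lemma Qspace_chain:
  assumes "c \<in> Qspace n"
  shows "evalQ n c (X @ concat (map (\<lambda>x. [x, - x]) xs)) (Z @ map (\<lambda>x. \<i> * x) xs) = evalQ n c X Z"
proof (induction xs arbitrary: X Z)
  case (Cons x xs)
  have "evalQ n c (X @ concat (map (\<lambda>x. [x, - x]) (x # xs))) (Z @ map (\<lambda>x. \<i> * x) (x # xs))
      = evalQ n c ((X @ [x, - x]) @ concat (map (\<lambda>x. [x, - x]) xs)) ((Z @ [\<i> * x]) @ map (\<lambda>x. \<i> * x) xs)"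
    by simp
  also have "\<dots> = evalQ n c (X @ [x, - x]) (Z @ [\<i> * x])"
    by (rule Cons.IH)
  also have "\<dots> = evalQ n c X Z"
    using assms by (simp add: Qspace_iff)
  finally show ?case .
qed simp

definition canonical :: "nat multiset \<times> nat multiset \<Rightarrow> bool" where
  "canonical p \<longleftrightarrow> (\<forall>i\<in>#fst p. odd i) \<and> (\<forall>j\<in>#snd p. even j)"

lemma wpoly_eq_0_if_canonical_coeffs_0:
  assumes "\<forall>p\<in>wmonos n. canonical p \<longrightarrow> c p = 0"
    and "\<And>r. r \<in> {1..n} \<Longrightarrow> even r \<Longrightarrow> a r = 0" "\<And>r. r \<in> {1..n} \<Longrightarrow> odd r \<Longrightarrow> b r = 0"
  shows "wpoly n c a b = 0"
  unfolding wpoly_def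
proof (intro sum.neutral ballI)
  fix p assume p: "p \<in> wmonos n"
  show "c p * (\<Prod>i\<in>#fst p. a i) * (\<Prod>j\<in>#snd p. b j) = 0"
  proof (cases "canonical p")
    case True
    then show ?thesis using assms(1) p by simp
  next
    case False
    then consider i where "i \<in># fst p" "even i" | j where "j \<in># snd p" "odd j"
      unfolding canonical_def by blast
    then show ?thesis
    proof cases
      case (1 i)
      then have "a i = 0"
        using assms(2) wmonos_index_bounded[OF p, of i] by simp
      with 1 show ?thesis by auto
    next
      case (2 j)
      then have "b j = 0"
        using assms(3) wmonos_index_bounded[OF p, of j] by simp
      with 2 show ?thesis by auto
    qed
  qed
qed

text \<open>Appending chain pairs \<open>x\<^sub>k, -x\<^sub>k | \<i> x\<^sub>k\<close> shifts \<open>S\<^sub>r(X)\<close> by \<open>2 S\<^sub>r(x)\<close> for even \<open>r\<close>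
  and \<open>S\<^sub>r(Z)\<close> by \<open>\<i>\<^sup>r S\<^sub>r(x)\<close> for odd \<open>r\<close>; choose the \<open>x\<^sub>k\<close> so that all these shifted
  power sums vanish.\<close>

lemma Qspace_wpoly_eq_0:
  assumes c: "c \<in> Qspace n" and "\<forall>p\<in>wmonos n. canonical p \<longrightarrow> c p = 0"
  shows "wpoly n c a b = 0"
proof -
  obtain X where X: "\<forall>r\<in>{1..n}. power_sum r X = a r"
    using power_sums_surj by blast
  obtain Z where Z: "\<forall>r\<in>{1..n}. power_sum r Z = b r"
    using power_sums_surj by blast
  obtain xs where xs: "\<forall>r\<in>{1..n}. power_sum r xs = (if odd r then - b r / \<i> ^ r else - a r / 2)"
    using power_sums_surj[of n "\<lambda>r. if odd r then - b r / \<i> ^ r else - a r / 2"] by blast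
  define X' where "X' = X @ concat (map (\<lambda>x. [x, - x]) xs)"
  define Z' where "Z' = Z @ map (\<lambda>x. \<i> * x) xs"
  have "wpoly n c a b = evalQ n c X Z"
    unfolding evalQ_eq_wpoly by (rule wpoly_cong) (use X Z in auto)
  also have "\<dots> = evalQ n c X' Z'"
    unfolding X'_def Z'_def using Qspace_chain[OF c] by simp
  also have "\<dots> = 0"
    unfolding evalQ_eq_wpoly
  proof (rule wpoly_eq_0_if_canonical_coeffs_0)
    show "power_sum r X' = 0" if "r \<in> {1..n}" "even r" for r
      using that X xs by (simp add: X'_def power_sum_pairs)
    show "power_sum r Z' = 0" if "r \<in> {1..n}" "odd r" for r
      using that Z xs by (simp add: Z'_def power_sum_scale)
  qed (rule assms(2))
  finally show ?thesis .
qed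

lemma Qspace_eq_0:
  assumes "c \<in> Qspace n" and "\<forall>p\<in>wmonos n. canonical p \<longrightarrow> c p = 0"
  shows "c = 0"
proof -
  have "\<forall>p\<in>wmonos n. c p = 0"
    using pair_monomial_coeffs_eq_0[OF finite_wmonos] Qspace_wpoly_eq_0[OF assms]
    unfolding wpoly_def by blast
  moreover have "homogeneous n c"
    using assms(1) by (simp add: Qspace_iff)
  ultimately have "c p = 0" for p
    unfolding homogeneous_def by blast
  then show ?thesis
    by auto
qed

section \<open>A basis of the chain-invariant polynomials\<close>

definition times_monomial :: "nat multiset \<Rightarrow> nat multiset \<Rightarrow> coeffs \<Rightarrow> coeffs" where
  "times_monomial l m c =
    (\<lambda>p. if l \<subseteq># fst p \<and> m \<subseteq># snd p then c (fst p - l, snd p - m) else 0)"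

lemma wmonos_add_monomial:
  assumes "0 \<notin># l" "0 \<notin># m"
  shows "(l' + l, m' + m) \<in> wmonos (d + sum_mset l + sum_mset m) \<longleftrightarrow> (l', m') \<in> wmonos d"
  using assms by (auto simp: wmonos_def)

lemma homogeneous_times_monomial:
  assumes "0 \<notin># l" "0 \<notin># m" "homogeneous d c"
  shows "homogeneous (d + sum_mset l + sum_mset m) (times_monomial l m c)"
  unfolding homogeneous_def
proof clarify
  fix l' m' assume p: "(l', m') \<notin> wmonos (d + sum_mset l + sum_mset m)"
  show "times_monomial l m c (l', m') = 0"
  proof (cases "l \<subseteq># l' \<and> m \<subseteq># m'")
    case True
    then have "(l' - l, m' - m) \<notin> wmonos d"
      using p wmonos_add_monomial[OF assms(1,2), of "l' - l" "m' - m" d] by simp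
    with assms(3) True show ?thesis
      by (simp add: times_monomial_def homogeneous_def)
  qed (auto simp: times_monomial_def)
qed

lemma wpoly_times_monomial:
  assumes "0 \<notin># l" "0 \<notin># m" "homogeneous d c"
  shows "wpoly (d + sum_mset l + sum_mset m) (times_monomial l m c) a b
    = (\<Prod>i\<in>#l. a i) * (\<Prod>j\<in>#m. b j) * wpoly d c a b"
proof -
  define shift where "shift q = (fst q + l, snd q + m)" for q :: "nat multiset \<times> nat multiset"
  have inj: "inj_on shift (wmonos d)"
    unfolding shift_def by (rule inj_onI) (auto simp: prod_eq_iff)
  have sub: "shift ` wmonos d \<subseteq> wmonos (d + sum_mset l + sum_mset m)"
    using wmonos_add_monomial[OF assms(1,2)] by (auto simp: shift_def)
  have outside_0: "times_monomial l m c p = 0"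
    if "p \<in> wmonos (d + sum_mset l + sum_mset m) - shift ` wmonos d" for p
  proof (cases "l \<subseteq># fst p \<and> m \<subseteq># snd p")
    case True
    then have "p = shift (fst p - l, snd p - m)"
      by (simp add: shift_def)
    with that have "(fst p - l, snd p - m) \<notin> wmonos d"
      by blast
    with assms(3) show ?thesis
      by (simp add: times_monomial_def homogeneous_def)
  qed (auto simp: times_monomial_def)
  have "wpoly (d + sum_mset l + sum_mset m) (times_monomial l m c) a b
      = (\<Sum>p\<in>shift ` wmonos d. times_monomial l m c p * (\<Prod>i\<in>#fst p. a i) * (\<Prod>j\<in>#snd p. b j))"
    unfolding wpoly_def by (rule sum.mono_neutral_right[OF finite_wmonos sub]) (use outside_0 in auto)
  also have "\<dots> = (\<Sum>q\<in>wmonos d. (\<Prod>i\<in>#l. a i) * (\<Prod>j\<in>#m. b j) * (c q * (\<Prod>i\<in>#fst q. a i) * (\<Prod>j\<in>#snd q. b j)))"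
    unfolding sum.reindex[OF inj] by (intro sum.cong refl) (simp add: shift_def times_monomial_def mult_ac)
  also have "\<dots> = (\<Prod>i\<in>#l. a i) * (\<Prod>j\<in>#m. b j) * wpoly d c a b"
    unfolding wpoly_def by (simp add: sum_distrib_left)
  finally show ?thesis .
qed

lemma homogeneous_diff_scaled:
  "homogeneous d f \<Longrightarrow> homogeneous d g \<Longrightarrow> homogeneous d (\<lambda>p. f p - k * g p)"
  by (simp add: homogeneous_def)

lemma wpoly_diff_scaled: "wpoly n (\<lambda>p. f p - k * g p) a b = wpoly n f a b - k * wpoly n g a b"
  unfolding wpoly_def by (simp add: sum_subtractf sum_distrib_left algebra_simps)

lemma wmonos_0: "wmonos 0 = {({#}, {#})}"
  unfolding wmonos_def by (auto, (metis multiset_nonemptyE)+)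

text \<open>The product of the linear forms \<open>\<xi>\<^sub>r\<close> (\<open>r\<close> odd) and \<open>\<eta>\<^sub>r - \<i>\<^sup>r \<xi>\<^sub>r / 2\<close> (\<open>r\<close> even)
  over the parts \<open>r\<close> of a partition; each factor is unchanged by a chain step.\<close>

definition chain_form :: "nat \<Rightarrow> (nat \<Rightarrow> complex) \<Rightarrow> (nat \<Rightarrow> complex) \<Rightarrow> complex" where
  "chain_form r a b = (if odd r then a r else b r - \<i> ^ r / 2 * a r)"

fun chain_basis :: "nat list \<Rightarrow> coeffs" where
  "chain_basis [] = (\<lambda>p. if p = ({#}, {#}) then 1 else 0)"
| "chain_basis (r # rs) =
    (if odd r then times_monomial {#r#} {#} (chain_basis rs)
     else (\<lambda>p. times_monomial {#} {#r#} (chain_basis rs) p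
                - \<i> ^ r / 2 * times_monomial {#r#} {#} (chain_basis rs) p))"

lemma homogeneous_chain_basis: "0 \<notin> set rs \<Longrightarrow> homogeneous (sum_list rs) (chain_basis rs)"
proof (induction rs)
  case (Cons r rs)
  then have r: "0 \<notin># {#r#}" and hom: "homogeneous (sum_list rs) (chain_basis rs)"
    by auto
  have xi: "homogeneous (sum_list (r # rs)) (times_monomial {#r#} {#} (chain_basis rs))"
    and eta: "homogeneous (sum_list (r # rs)) (times_monomial {#} {#r#} (chain_basis rs))"
    using homogeneous_times_monomial[of "{#r#}" "{#}", OF r _ hom]
      homogeneous_times_monomial[of "{#}" "{#r#}", OF _ r hom] by (simp_all add: add.commute)
  show ?case
  proof (cases "odd r")
    case False
    show ?thesis
      unfolding chain_basis.simps if_not_P[OF False] by (rule homogeneous_diff_scaled[OF eta xi])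
  qed (use xi in simp)
qed (simp add: homogeneous_def wmonos_0)

lemma wpoly_chain_basis:
  "0 \<notin> set rs \<Longrightarrow> wpoly (sum_list rs) (chain_basis rs) a b = (\<Prod>r\<leftarrow>rs. chain_form r a b)"
proof (induction rs)
  case (Cons r rs)
  then have r: "0 \<notin># {#r#}" and hom: "homogeneous (sum_list rs) (chain_basis rs)"
    by (auto intro: homogeneous_chain_basis)
  have xi: "wpoly (sum_list (r # rs)) (times_monomial {#r#} {#} (chain_basis rs)) a b
      = a r * wpoly (sum_list rs) (chain_basis rs) a b"
    and eta: "wpoly (sum_list (r # rs)) (times_monomial {#} {#r#} (chain_basis rs)) a b
      = b r * wpoly (sum_list rs) (chain_basis rs) a b"
    using wpoly_times_monomial[of "{#r#}" "{#}", OF r _ hom]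
      wpoly_times_monomial[of "{#}" "{#r#}", OF _ r hom] by (simp_all add: add.commute)
  show ?case
  proof (cases "odd r")
    case True
    with Cons xi show ?thesis
      by (simp add: chain_form_def)
  next
    case False
    then have "wpoly (sum_list (r # rs)) (chain_basis (r # rs)) a b
        = chain_form r a b * wpoly (sum_list rs) (chain_basis rs) a b"
      unfolding chain_basis.simps if_not_P[OF False] wpoly_diff_scaled xi eta chain_form_def
      by (simp add: algebra_simps)
    with Cons show ?thesis
      by simp
  qed
qed (simp add: wpoly_def wmonos_0)

lemma chain_form_invariant:
  "chain_form r (\<lambda>i. power_sum i (X @ [x, - x])) (\<lambda>j. power_sum j (Z @ [\<i> * x]))
    = chain_form r (\<lambda>i. power_sum i X) (\<lambda>j. power_sum j Z)"
proof (cases "odd r")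
  case False
  then have "(- x) ^ r = x ^ r"
    by simp
  with False show ?thesis
    by (simp add: chain_form_def power_mult_distrib algebra_simps)
qed (simp add: chain_form_def)

lemma chain_basis_in_Qspace: "0 \<notin> set rs \<Longrightarrow> chain_basis rs \<in> Qspace (sum_list rs)"
  by (simp add: Qspace_iff homogeneous_chain_basis evalQ_eq_wpoly wpoly_chain_basis chain_form_invariant
      del: power_sum_append power_sum_Cons)

definition split_parity :: "nat multiset \<Rightarrow> nat multiset \<times> nat multiset" where
  "split_parity m = (filter_mset odd m, filter_mset even m)"

lemma chain_basis_canonical:
  "canonical p \<Longrightarrow> chain_basis rs p = (if p = split_parity (mset rs) then 1 else 0)"
proof (induction rs arbitrary: p)
  case (Cons r rs)
  obtain l m where p: "p = (l, m)"
    by (cases p)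
  have l: "\<forall>i\<in>#l. odd i" and m: "\<forall>j\<in>#m. even j"
    using Cons.prems p by (auto simp: canonical_def)
  show ?case
  proof (cases "odd r")
    case True
    then have "r \<notin># m" using m by auto
    moreover have "canonical (l - {#r#}, m)"
      using l m by (auto simp: canonical_def dest: in_diffD)
    ultimately show ?thesis
      using Cons.IH[of "(l - {#r#}, m)"] True p
      by (auto simp: times_monomial_def split_parity_def insert_DiffM dest: multi_member_split)
  next
    case False
    then have "r \<notin># l" using l by auto
    moreover have "canonical (l, m - {#r#})"
      using l m by (auto simp: canonical_def dest: in_diffD)
    ultimately show ?thesis
      using Cons.IH[of "(l, m - {#r#})"] False p
      by (auto simp: times_monomial_def split_parity_def insert_DiffM dest: multi_member_split)
  qed
qed (simp add: split_parity_def)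

definition partitions :: "nat \<Rightarrow> nat multiset set" where
  "partitions n = {m. 0 \<notin># m \<and> sum_mset m = n}"

definition partition_basis :: "nat multiset \<Rightarrow> coeffs" where
  "partition_basis m = chain_basis (sorted_list_of_multiset m)"

lemma finite_partitions: "finite (partitions n)"
proof -
  have "partitions n \<subseteq> fst ` wmonos n"
    unfolding partitions_def wmonos_def by (auto intro!: image_eqI[where x = "(_, {#})"])
  then show ?thesis
    using finite_wmonos finite_surj by blast
qed

lemma split_parity_eq_iff: "split_parity m = split_parity m' \<longleftrightarrow> m = m'"
  unfolding split_parity_def by (metis multiset_partition prod.inject)

lemma canonical_split_parity: "canonical (split_parity m)"
  by (simp add: canonical_def split_parity_def)

lemma canonical_eq_split_parity:
  assumes "canonical p"
  shows "p = split_parity (fst p + snd p)"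
proof (cases p)
  case (Pair l m)
  with assms have "filter_mset odd l = l" "filter_mset even m = m"
    by (auto simp: canonical_def filter_mset_eq_conv)
  moreover have "filter_mset odd m = {#}" "filter_mset even l = {#}"
    using assms Pair by (auto simp: canonical_def)
  ultimately show ?thesis
    using Pair by (simp add: split_parity_def)
qed

lemma partition_basis_in_Qspace: "m \<in> partitions n \<Longrightarrow> partition_basis m \<in> Qspace n"
  using chain_basis_in_Qspace[of "sorted_list_of_multiset m"]
  by (simp add: partition_basis_def partitions_def flip: sum_mset_sum_list)

lemma partition_basis_split_parity:
  "partition_basis m (split_parity m') = (if m' = m then 1 else 0)"
  by (simp add: partition_basis_def chain_basis_canonical canonical_split_parity split_parity_eq_iff)

lemma inj_on_partition_basis: "inj_on partition_basis (partitions n)"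
  by (rule inj_onI) (metis partition_basis_split_parity zero_neq_one)

interpretation coeff_space: vector_space "\<lambda>(a::complex) (f::coeffs) p. a * f p"
  by unfold_locales (auto simp: fun_eq_iff algebra_simps)

lemma evalQ_add: "evalQ n (f + g) X Z = evalQ n f X Z + evalQ n g X Z"
  unfolding evalQ_def by (simp add: sum.distrib algebra_simps)

lemma evalQ_scale: "evalQ n (\<lambda>p. a * f p) X Z = a * evalQ n f X Z"
  unfolding evalQ_def by (simp add: sum_distrib_left algebra_simps)

lemma evalQ_zero: "evalQ n 0 X Z = 0"
  unfolding evalQ_def by simp

lemma subspace_Qspace: "coeff_space.subspace (Qspace n)"
  unfolding coeff_space.subspace_def Qspace_def
  by (auto simp: evalQ_add evalQ_scale evalQ_zero)

lemma sum_fun_apply: "sum f A x = (\<Sum>a\<in>A. f a x)"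
  by (induction A rule: infinite_finite_induct) auto

lemma independent_partition_basis: "coeff_space.independent (partition_basis ` partitions n)"
  unfolding coeff_space.dependent_explicit
proof clarify
  fix T u v assume T: "finite T" "T \<subseteq> partition_basis ` partitions n"
    and combination: "(\<Sum>w\<in>T. (\<lambda>p. u w * w p)) = 0" and v: "v \<in> T" "u v \<noteq> 0"
  obtain m where m: "m \<in> partitions n" "v = partition_basis m"
    using v T by auto
  have "0 = (\<Sum>w\<in>T. u w * w (split_parity m))"
    using fun_cong[OF combination, of "split_parity m"] by (simp add: sum_fun_apply)
  also have "\<dots> = (\<Sum>w\<in>T. if w = v then u w else 0)"
  proof (intro sum.cong refl)
    fix w assume "w \<in> T"
    then obtain m' where m': "m' \<in> partitions n" "w = partition_basis m'"
      using T by auto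
    then have "m' = m \<longleftrightarrow> w = v"
      using m inj_on_partition_basis[of n] by (auto dest: inj_onD)
    then show "u w * w (split_parity m) = (if w = v then u w else 0)"
      using m' by (auto simp: partition_basis_split_parity)
  qed
  also have "\<dots> = u v"
    using T v by simp
  finally show False
    using v by simp
qed

text \<open>An element of \<open>Q\<^sub>n\<close> is determined by its canonical coefficients, and the basis
  elements realise every choice of them.\<close>

lemma span_partition_basis: "coeff_space.span (partition_basis ` partitions n) = Qspace n"
proof (rule coeff_space.span_subspace)
  show "partition_basis ` partitions n \<subseteq> Qspace n"
    using partition_basis_in_Qspace by auto
  show "coeff_space.subspace (Qspace n)"
    by (rule subspace_Qspace)
  show "Qspace n \<subseteq> coeff_space.span (partition_basis ` partitions n)"
  proof
    fix c assume c: "c \<in> Qspace n"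
    define s where "s = (\<Sum>m\<in>partitions n. (\<lambda>p. c (split_parity m) * partition_basis m p))"
    have s_span: "s \<in> coeff_space.span (partition_basis ` partitions n)"
      unfolding s_def by (intro coeff_space.span_sum coeff_space.span_scale coeff_space.span_base) auto
    then have "s \<in> Qspace n"
      using coeff_space.span_minimal[OF _ subspace_Qspace] partition_basis_in_Qspace by blast
    then have diff: "c - s \<in> Qspace n"
      by (rule coeff_space.subspace_diff[OF subspace_Qspace c])
    have "(c - s) p = 0" if "p \<in> wmonos n" "canonical p" for p
    proof -
      define m0 where "m0 = fst p + snd p"
      have p: "p = split_parity m0"
        unfolding m0_def using that(2) by (rule canonical_eq_split_parity)
      have "m0 \<in> partitions n"
        using that(1) unfolding m0_def partitions_def wmonos_def by auto
      then have "s p = c p"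
        using finite_partitions
        by (simp add: s_def sum_fun_apply p partition_basis_split_parity if_distrib cong: if_cong)
      then show ?thesis
        by simp
    qed
    then have "c = s"
      using Qspace_eq_0[OF diff] by auto
    with s_span show "c \<in> coeff_space.span (partition_basis ` partitions n)"
      by simp
  qed
qed

lemma dimQ_eq_card_partitions: "dimQ n = card (partitions n)"
proof -
  have "dimQ n = coeff_space.dim (coeff_space.span (partition_basis ` partitions n))"
    unfolding dimQ_def span_partition_basis ..
  also have "\<dots> = card (partition_basis ` partitions n)"
    using coeff_space.dim_span coeff_space.dim_eq_card_independent[OF independent_partition_basis] by simp
  also have "\<dots> = card (partitions n)"
    using inj_on_partition_basis card_image by blast
  finally show ?thesis .
qed

section \<open>Generating functions of partitions\<close>

definition partitions_le :: "nat \<Rightarrow> nat \<Rightarrow> nat multiset set" where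
  "partitions_le K n = {m\<in>partitions n. \<forall>x\<in>#m. x \<le> K}"

lemma partitions_le_0: "partitions_le 0 n = (if n = 0 then {{#}} else {})"
proof -
  have "m = {#}" if "m \<in> partitions_le 0 n" for m
  proof (rule ccontr)
    assume "m \<noteq> {#}"
    then obtain x where "x \<in># m"
      by (metis multiset_nonemptyE)
    with that show False
      by (auto simp: partitions_le_def partitions_def)
  qed
  moreover have "{#} \<in> partitions_le 0 n \<longleftrightarrow> n = 0"
    by (auto simp: partitions_le_def partitions_def)
  ultimately show ?thesis
    by auto
qed

lemma of_nat_card_partitions_le_0: "of_nat (card (partitions_le 0 n)) * z ^ n = (if n = 0 then 1 else 0)"
  by (simp add: partitions_le_0)

lemma partitions_le_subset: "partitions_le K n \<subseteq> partitions n"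
  by (auto simp: partitions_le_def)

lemma partitions_le_eq_partitions: "n \<le> K \<Longrightarrow> partitions_le K n = partitions n"
  unfolding partitions_le_def partitions_def by (auto dest: member_le_sum_mset)

lemma card_partitions_le_Suc:
  "card (partitions_le (Suc K) n)
    = card (partitions_le K n) + (if Suc K \<le> n then card (partitions_le (Suc K) (n - Suc K)) else 0)"
proof -
  define top where "top = {m\<in>partitions_le (Suc K) n. Suc K \<in># m}"
  have split: "partitions_le (Suc K) n = partitions_le K n \<union> top"
    and disjoint: "partitions_le K n \<inter> top = {}"
    unfolding top_def partitions_le_def by (auto simp: le_Suc_eq)
  have "top = add_mset (Suc K) ` partitions_le (Suc K) (n - Suc K)" if "Suc K \<le> n"
  proof
    show "add_mset (Suc K) ` partitions_le (Suc K) (n - Suc K) \<subseteq> top"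
      using that by (auto simp: top_def partitions_le_def partitions_def)
    show "top \<subseteq> add_mset (Suc K) ` partitions_le (Suc K) (n - Suc K)"
    proof
      fix m assume m: "m \<in> top"
      then obtain m' where m': "m = add_mset (Suc K) m'"
        unfolding top_def by (metis (no_types, lifting) mem_Collect_eq multi_member_split)
      with m have "m' \<in> partitions_le (Suc K) (n - Suc K)"
        by (auto simp: top_def partitions_le_def partitions_def)
      with m' show "m \<in> add_mset (Suc K) ` partitions_le (Suc K) (n - Suc K)"
        by blast
    qed
  qed
  moreover have "top = {}" if "\<not> Suc K \<le> n"
    using that by (auto simp: top_def partitions_le_def partitions_def dest: member_le_sum_mset)
  ultimately have "card top = (if Suc K \<le> n then card (partitions_le (Suc K) (n - Suc K)) else 0)"
    by (simp add: card_image inj_on_def)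
  moreover have "finite (partitions_le K n)" "finite top"
    using finite_partitions partitions_le_subset unfolding top_def partitions_le_def by auto
  ultimately show ?thesis
    unfolding split by (simp add: card_Un_disjoint[OF _ _ disjoint])
qed

lemma sum_lessThan_shift_if:
  "(\<Sum>n<(N::nat). if s \<le> n then f (n - s) else 0) = (\<Sum>n<N - s. f n)"
proof (induction N)
  case (Suc N)
  then show ?case
    by (cases "s \<le> N") (simp_all add: Suc_diff_le)
qed simp

lemma summable_shift_recurrence:
  fixes f g :: "nat \<Rightarrow> real"
  assumes rec: "\<And>n. f n = g n + (if s \<le> n then w * f (n - s) else 0)"
    and g: "summable g" "\<And>n. 0 \<le> g n" and f: "\<And>n. 0 \<le> f n" and w: "0 \<le> w" "w < 1"
  shows "summable f"
proof (rule summableI_nonneg_bounded)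
  fix N
  have "(\<Sum>n<N. f n) = (\<Sum>n<N. g n + (if s \<le> n then w * f (n - s) else 0))"
    by (rule sum.cong[OF refl rec])
  also have "\<dots> = (\<Sum>n<N. g n) + w * (\<Sum>n<N - s. f n)"
    by (simp only: sum.distrib sum_lessThan_shift_if[where N = N and s = s and f = "\<lambda>n. w * f n"]
        sum_distrib_left)
  also have "\<dots> \<le> suminf g + w * (\<Sum>n<N. f n)"
    using g f w by (intro add_mono mult_left_mono sum_le_suminf sum_mono2) auto
  finally show "(\<Sum>n<N. f n) \<le> suminf g / (1 - w)"
    using w by (simp add: field_simps)
qed (rule f)

lemma sums_shift_recurrence:
  fixes f g :: "nat \<Rightarrow> 'a::real_normed_field"
  assumes rec: "\<And>n. f n = g n + (if s \<le> n then w * f (n - s) else 0)"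
    and "g sums A" "summable f"
  shows "f sums (A + w * suminf f)"
proof -
  define h where "h n = (if s \<le> n then w * f (n - s) else 0)" for n
  have "(\<lambda>n. h (n + s)) sums (w * suminf f)"
    unfolding h_def using sums_mult[OF summable_sums[OF assms(3)], of w] by simp
  then have "h sums (w * suminf f + (\<Sum>n<s. h n))"
    by (simp only: sums_iff_shift)
  moreover have "(\<Sum>n<s. h n) = 0"
    by (simp add: h_def)
  ultimately have "h sums (w * suminf f)"
    by simp
  moreover have "(\<lambda>n. g n + h n) sums c \<longleftrightarrow> f sums c" for c
    by (rule sums_cong) (unfold h_def, rule rec[symmetric])
  ultimately show ?thesis
    using sums_add[OF assms(2)] by blast
qed

lemma of_nat_card_partitions_le_Suc:
  fixes z :: "'a::comm_ring_1"
  shows "of_nat (card (partitions_le (Suc K) n)) * z ^ n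
    = of_nat (card (partitions_le K n)) * z ^ n
      + (if Suc K \<le> n then z ^ Suc K * (of_nat (card (partitions_le (Suc K) (n - Suc K))) * z ^ (n - Suc K)) else 0)"
proof (cases "Suc K \<le> n")
  case True
  then have "z ^ n = z ^ Suc K * z ^ (n - Suc K)"
    by (metis le_add_diff_inverse power_add)
  with True show ?thesis
    unfolding card_partitions_le_Suc[of K n] by (simp add: algebra_simps)
qed (simp add: card_partitions_le_Suc[of K n])

lemma summable_partitions_le:
  fixes r :: real
  assumes "0 \<le> r" "r < 1"
  shows "summable (\<lambda>n. real (card (partitions_le K n)) * r ^ n)"
proof (induction K)
  case 0
  show ?case
    unfolding of_nat_card_partitions_le_0 using sums_single[of 0 "\<lambda>_. 1::real"] by (simp add: sums_iff)
next
  case (Suc K)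
  show ?case
  proof (rule summable_shift_recurrence[OF of_nat_card_partitions_le_Suc Suc.IH])
    show "r ^ Suc K < 1"
      using assms power_less_one_iff[of r "Suc K"] by (simp del: power_Suc)
  qed (use assms in simp_all)
qed

lemma norm_power_Suc_less_one:
  fixes z :: "'a::real_normed_div_algebra"
  shows "norm z < 1 \<Longrightarrow> norm (z ^ Suc k) < 1"
  using power_less_one_iff[of "norm z" "Suc k"] by (simp add: norm_power del: power_Suc)

lemma partitions_le_generating_function:
  fixes z :: "'a::{real_normed_field,banach}"
  assumes z: "norm z < 1"
  shows "(\<lambda>n. of_nat (card (partitions_le K n)) * z ^ n) sums (\<Prod>k<K. 1 / (1 - z ^ Suc k))"
proof (induction K)
  case 0
  show ?case
    unfolding of_nat_card_partitions_le_0 using sums_single[of 0 "\<lambda>_. 1::'a"] by simp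
next
  case (Suc K)
  define f where "f n = of_nat (card (partitions_le (Suc K) n)) * z ^ n" for n
  define P where "P = (\<Prod>k<K. 1 / (1 - z ^ Suc k))"
  define w where "w = z ^ Suc K"
  have "summable (\<lambda>n. norm (f n))"
    using summable_partitions_le[of "norm z" "Suc K"] z by (simp add: f_def norm_mult norm_power)
  then have f: "summable f"
    by (rule summable_norm_cancel)
  then have "f sums (P + w * suminf f)"
    unfolding f_def P_def w_def by (rule sums_shift_recurrence[OF of_nat_card_partitions_le_Suc Suc.IH])
  then have fixpoint: "P + w * suminf f = suminf f"
    by (rule sums_unique)
  have "w \<noteq> 1"
    using norm_power_Suc_less_one[OF z, of K] unfolding w_def by auto
  moreover have "suminf f * (1 - w) = P"
    using fixpoint by (simp add: algebra_simps)
  ultimately have "suminf f = P * (1 / (1 - w))"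
    by (simp add: eq_divide_eq)
  with f show ?case
    unfolding f_def P_def w_def by (simp add: sums_iff)
qed

lemma convergent_prod_inverse_one_minus_powers:
  fixes z :: "'a::{real_normed_field,banach}"
  assumes "norm z < 1"
  shows "convergent_prod (\<lambda>k. 1 / (1 - z ^ Suc k))"
proof -
  have "summable (\<lambda>k. norm z * norm z ^ k)"
    using assms by (intro summable_mult summable_geometric) simp
  then have "summable (\<lambda>k. norm ((1 - z ^ Suc k) - 1))"
    by (simp add: norm_mult norm_power)
  then have "convergent_prod (\<lambda>k. 1 - z ^ Suc k)"
    by (intro abs_convergent_prod_imp_convergent_prod) (simp add: abs_convergent_prod_conv_summable)
  then have "convergent_prod (\<lambda>k. inverse (1 - z ^ Suc k))"
    by simp
  then show ?thesis
    by (simp add: inverse_eq_divide)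
qed

lemma summable_partitions:
  fixes r :: real
  assumes r: "0 \<le> r" "r < 1"
  shows "summable (\<lambda>n. real (card (partitions n)) * r ^ n)"
proof (rule summableI_nonneg_bounded)
  fix N
  define f where "f k = 1 / (1 - r ^ Suc k)" for k
  have f_ge_1: "1 \<le> f k" for k
    using r power_less_one_iff[of r "Suc k"] by (simp add: f_def del: power_Suc)
  have "(\<Sum>n<N. real (card (partitions n)) * r ^ n) = (\<Sum>n<N. real (card (partitions_le N n)) * r ^ n)"
    by (intro sum.cong refl) (simp add: partitions_le_eq_partitions)
  also have "\<dots> \<le> (\<Sum>n. real (card (partitions_le N n)) * r ^ n)"
    using r by (intro sum_le_suminf summable_partitions_le) auto
  also have "\<dots> = prod f {..<N}"
    using partitions_le_generating_function[of r N] r by (simp add: f_def sums_iff)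
  also have "\<dots> \<le> prodinf f"
  proof (rule prod_le_prodinf)
    show "f has_prod prodinf f"
      using convergent_prod_inverse_one_minus_powers[of r] r by (auto simp: f_def[abs_def])
  qed (use f_ge_1 in \<open>auto intro: order_trans[OF zero_le_one]\<close>)
  finally show "(\<Sum>n<N. real (card (partitions n)) * r ^ n) \<le> prodinf f" .
qed (use r in simp)

text \<open>Let the bound \<open>K\<close> on the parts tend to infinity; the limit may be taken termwise by
  Tannery's theorem, with the dominating series supplied by the real case.\<close>

theorem partitions_generating_function:
  fixes q :: "'a::{real_normed_field,banach}"
  assumes q: "norm q < 1"
  shows "(\<lambda>n. of_nat (card (partitions n)) * q ^ n) sums (\<Prod>k. 1 / (1 - q ^ Suc k))"
proof -
  define a where "a n N = of_nat (card (partitions_le N n)) * q ^ n" for n N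
  let ?b = "\<lambda>n. of_nat (card (partitions n)) * q ^ n"
  have tannery: "summable (\<lambda>n. norm (?b n)) \<and> ((\<lambda>N. \<Sum>n. a n N) \<longlongrightarrow> suminf ?b) sequentially"
  proof (intro tannerys_theorem[where M = "\<lambda>n. real (card (partitions n)) * norm q ^ n", THEN conjunct2])
    show "((\<lambda>N. a n N) \<longlongrightarrow> ?b n) sequentially" for n
    proof (rule tendsto_eventually)
      show "eventually (\<lambda>N. a n N = ?b n) sequentially"
        using eventually_ge_at_top[of n]
        by eventually_elim (simp add: a_def partitions_le_eq_partitions)
    qed
    have "card (partitions_le N n) \<le> card (partitions n)" for N n
      by (rule card_mono[OF finite_partitions partitions_le_subset])
    then have "norm (a n N) \<le> real (card (partitions n)) * norm q ^ n" for n N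
      by (simp add: a_def norm_mult norm_power mult_right_mono)
    then show "eventually (\<lambda>(n, N). norm (a n N) \<le> real (card (partitions n)) * norm q ^ n)
        (at_top \<times>\<^sub>F sequentially)"
      by (simp add: always_eventually)
    show "summable (\<lambda>n. real (card (partitions n)) * norm q ^ n)"
      using q by (intro summable_partitions) auto
  qed simp
  have "(\<Sum>n. a n N) = (\<Prod>k<N. 1 / (1 - q ^ Suc k))" for N
    using partitions_le_generating_function[OF q, of N] by (simp add: a_def sums_iff)
  with tannery have "(\<lambda>N. \<Prod>k<N. 1 / (1 - q ^ Suc k)) \<longlonglongrightarrow> suminf ?b"
    by simp
  moreover have "(\<lambda>N. \<Prod>k<Suc N. 1 / (1 - q ^ Suc k)) \<longlonglongrightarrow> (\<Prod>k. 1 / (1 - q ^ Suc k))"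
    using convergent_prod_LIMSEQ[OF convergent_prod_inverse_one_minus_powers[OF q]]
    by (simp add: lessThan_Suc_atMost)
  ultimately have "suminf ?b = (\<Prod>k. 1 / (1 - q ^ Suc k))"
    by (rule LIMSEQ_unique[OF LIMSEQ_Suc])
  moreover have "summable ?b"
    using tannery by (blast intro: summable_norm_cancel)
  ultimately show ?thesis
    by (simp add: sums_iff)
qed

theorem theorem5:
  fixes q :: complex
  assumes "norm q < 1"
  shows "(\<lambda>n. of_nat (dimQ n) * q ^ n) sums (\<Prod>k. 1 / (1 - q ^ Suc k))"
  using partitions_generating_function[OF assms] by (simp add: dimQ_eq_card_partitions)

end
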